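(* Let $(V,w,\mu)$ be a simple weighted graph and let $\mathcal V:V\to[0,\infty)$. Then \[\mathcal F^{\mathcal V}=\mathcal F\cap L^2(V,\mathcal V\cdot\mu).\]
   Context: A simple weighted graph $(V,w,\mu)$ consists of a countably infinite set $V$, a symmetric function $w:V\times V\to[0,\infty)$ and a function $\mu:V\to(0,\infty)$. The graph with edges $\{x\sim y:w(x,y)>0\}$ is assumed to be locally finite, connected, and without loops or multiple edges. $C_c(V)$ denotes the finitely supported functions. For a potential $\mathcal V\ge0$, define on $C_c(V)$ \[\mathcal E^{\mathcal V}(u,u)=\frac12\sum_{x,y\in V}w(x,y)(u(x)-u(y))^2+\sum_{x}\mathcal V(x)u(x)^2\mu(x).\] Let $\mathcal F^{\mathcal V}$ be the closure of $C_c(V)$ with respect to the norm $\big(\mathcal E^{\mathcal V}(u,u)+\|u\|^2_{L^2(V,\mu)}\big)^{1/2}$, taken inside the space of $u\in L^2(V,\mu)$ for which that expression is finite. Set $\mathcal F=\mathcal F^{0}$. The measure $\mathcal V\cdot\mu$ is given by $x\mapsto\mathcal V(x)\mu(x)$. *)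

theory Defs
  imports "HOL-Analysis.Analysis"
begin

text \<open>Vertices are the elements of the type 'a (so V = UNIV). Weights w, measure mu.\<close>

definition simple_weighted_graph :: "('a \<Rightarrow> 'a \<Rightarrow> real) \<Rightarrow> ('a \<Rightarrow> real) \<Rightarrow> bool" where
  "simple_weighted_graph w mu \<longleftrightarrow>
     countable (UNIV :: 'a set) \<and> infinite (UNIV :: 'a set) \<and>
     (\<forall>x y. w x y = w y x) \<and> (\<forall>x y. 0 \<le> w x y) \<and>
     (\<forall>x. w x x = 0) \<and>
     (\<forall>x. finite {y. 0 < w x y}) \<and>
     (\<forall>x y. (x, y) \<in> {(a, b). 0 < w a b}\<^sup>*) \<and>
     (\<forall>x. 0 < mu x)"

definition fin_supp :: "('a \<Rightarrow> real) \<Rightarrow> bool" where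
  "fin_supp u \<longleftrightarrow> finite {x. u x \<noteq> 0}"

definition in_L2 :: "('a \<Rightarrow> real) \<Rightarrow> ('a \<Rightarrow> real) \<Rightarrow> bool" where
  "in_L2 m u \<longleftrightarrow> (\<lambda>x. (u x)\<^sup>2 * m x) summable_on UNIV"

definition L2_norm_sq :: "('a \<Rightarrow> real) \<Rightarrow> ('a \<Rightarrow> real) \<Rightarrow> real" where
  "L2_norm_sq m u = (\<Sum>\<^sub>\<infinity>x. (u x)\<^sup>2 * m x)"

definition energy_finite :: "('a \<Rightarrow> 'a \<Rightarrow> real) \<Rightarrow> ('a \<Rightarrow> real) \<Rightarrow> ('a \<Rightarrow> real) \<Rightarrow> ('a \<Rightarrow> real) \<Rightarrow> bool" where
  "energy_finite w mu pot u \<longleftrightarrow>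
     (\<lambda>(x, y). w x y * (u x - u y)\<^sup>2) summable_on UNIV \<and>
     (\<lambda>x. pot x * (u x)\<^sup>2 * mu x) summable_on UNIV"

definition energy :: "('a \<Rightarrow> 'a \<Rightarrow> real) \<Rightarrow> ('a \<Rightarrow> real) \<Rightarrow> ('a \<Rightarrow> real) \<Rightarrow> ('a \<Rightarrow> real) \<Rightarrow> real" where
  "energy w mu pot u =
     (1/2) * infsum (\<lambda>(x, y). w x y * (u x - u y)\<^sup>2) UNIV
     + (\<Sum>\<^sub>\<infinity>x. pot x * (u x)\<^sup>2 * mu x)"

text \<open>F^V: closure of C_c(V) w.r.t. the form norm (E^V(u,u) + ||u||^2)^(1/2),
  taken inside the space of u in L^2(V,mu) with finite E^V(u,u).\<close>
definition form_domain :: "('a \<Rightarrow> 'a \<Rightarrow> real) \<Rightarrow> ('a \<Rightarrow> real) \<Rightarrow> ('a \<Rightarrow> real) \<Rightarrow> ('a \<Rightarrow> real) set" where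
  "form_domain w mu pot =
     {u. in_L2 mu u \<and> energy_finite w mu pot u \<and>
         (\<forall>\<epsilon>>0. \<exists>\<phi>. fin_supp \<phi> \<and>
             sqrt (energy w mu pot (\<lambda>x. u x - \<phi> x) + L2_norm_sq mu (\<lambda>x. u x - \<phi> x)) < \<epsilon>)}"

end

theory Submission
  imports Defs
begin

text \<open>
  The inclusion of F^V in F \<inter> L^2(V, V mu) is immediate because V \<ge> 0. Conversely, let u lie in
  F \<inter> L^2(V, V mu) and let \<phi> be finitely supported and close to u in the norm of F. Clamp
  d = u - \<phi> pointwise between 0 and u, obtaining g. Then u - g is finitely supported, since
  g = u wherever \<phi> = 0, and g is small in the norm of F^V. Choose finite sets of vertices and of
  edges outside of which the potential part and the edge part of the energy of u are small. On
  these finite sets use |g| \<le> |d| and the pointwise bound d(x)^2 \<le> ||d||^2 / mu(x). Outside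
  them use |g| \<le> |u| and |g(x) - g(y)| \<le> |d(x) - d(y)| + |u(x) - u(y)|.
\<close>

lemma power2_add_le: "((a::real) + b)\<^sup>2 \<le> 2 * a\<^sup>2 + 2 * b\<^sup>2"
  using sum_squares_bound[of a b] by (simp add: power2_sum)

lemma power2_diff_le: "((a::real) - b)\<^sup>2 \<le> 2 * a\<^sup>2 + 2 * b\<^sup>2"
  using power2_add_le[of a "- b"] by simp

lemma infsum_tail_le:
  fixes f :: "'b \<Rightarrow> real"
  assumes "f summable_on UNIV" and "0 < \<eta>"
  obtains F where "finite F" and "infsum f (- F) \<le> \<eta>"
proof -
  obtain F where F: "finite F" "dist (sum f F) (infsum f UNIV) \<le> \<eta>"
    using infsum_finite_approximation[OF assms] by blast
  have "infsum f UNIV = infsum f (F \<union> - F)"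
    by simp
  also have "\<dots> = sum f F + infsum f (- F)"
    using F(1) summable_on_subset_banach[OF assms(1)] by (subst infsum_Un_disjoint) auto
  finally show ?thesis
    using that F by (simp add: dist_real_def)
qed

lemma infsum_le_finite_part_plus_tail:
  fixes f a b :: "'b \<Rightarrow> real"
  assumes F: "finite F" and a: "a summable_on UNIV" and b: "b summable_on UNIV"
    and f_nonneg: "\<And>p. 0 \<le> f p" and a_nonneg: "\<And>p. 0 \<le> a p"
    and f_le: "\<And>p. p \<notin> F \<Longrightarrow> f p \<le> a p + b p"
  shows "f summable_on UNIV"
    and "infsum f UNIV \<le> sum f F + infsum a UNIV + infsum b (- F)"
proof -
  have a_tail: "a summable_on - F" and b_tail: "b summable_on - F"
    using a b by (auto intro: summable_on_subset_banach)
  have ab_tail: "(\<lambda>p. a p + b p) summable_on - F"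
    using a_tail b_tail by (rule summable_on_add)
  have f_tail: "f summable_on - F"
    using ab_tail by (rule summable_on_comparison_test) (use f_nonneg f_le in auto)
  have UNIV_split: "UNIV = F \<union> - F"
    by simp
  show "f summable_on UNIV"
    by (subst UNIV_split, rule summable_on_Un_disjoint) (use F f_tail in auto)
  have "infsum f UNIV = sum f F + infsum f (- F)"
    by (subst UNIV_split, subst infsum_Un_disjoint) (use F f_tail in auto)
  also have "\<dots> \<le> sum f F + infsum (\<lambda>p. a p + b p) (- F)"
    using infsum_mono[OF f_tail ab_tail] f_le by simp
  also have "\<dots> = sum f F + infsum a (- F) + infsum b (- F)"
    using infsum_add[OF a_tail b_tail] by simp
  also have "infsum a (- F) \<le> infsum a UNIV"
    by (rule infsum_mono_neutral[OF a_tail a]) (use a_nonneg in auto)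
  finally show "infsum f UNIV \<le> sum f F + infsum a UNIV + infsum b (- F)"
    by simp
qed

definition clip :: "real \<Rightarrow> real \<Rightarrow> real" where
  "clip u t = max (min 0 u) (min (max 0 u) t)"

lemma clip_self [simp]: "clip u u = u"
  unfolding clip_def by linarith

lemma abs_clip_le: "\<bar>clip u t\<bar> \<le> \<bar>t\<bar>"
  unfolding clip_def by linarith

lemma abs_clip_le_bound: "\<bar>clip u t\<bar> \<le> \<bar>u\<bar>"
  unfolding clip_def by linarith

lemma abs_clip_diff_le: "\<bar>clip u t - clip v s\<bar> \<le> \<bar>u - v\<bar> + \<bar>t - s\<bar>"
  unfolding clip_def by linarith

lemma power2_clip_le: "(clip u t)\<^sup>2 \<le> t\<^sup>2"
  using abs_clip_le abs_le_square_iff by blast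

lemma power2_clip_le_bound: "(clip u t)\<^sup>2 \<le> u\<^sup>2"
  using abs_clip_le_bound abs_le_square_iff by blast

lemma power2_clip_diff_le: "(clip u t - clip v s)\<^sup>2 \<le> 2 * (u - v)\<^sup>2 + 2 * (t - s)\<^sup>2"
proof -
  have "(clip u t - clip v s)\<^sup>2 \<le> (\<bar>u - v\<bar> + \<bar>t - s\<bar>)\<^sup>2"
    using abs_clip_diff_le[of u t v s] abs_le_square_iff by fastforce
  also have "\<dots> \<le> 2 * (u - v)\<^sup>2 + 2 * (t - s)\<^sup>2"
    using power2_add_le[of "\<bar>u - v\<bar>" "\<bar>t - s\<bar>"] by simp
  finally show ?thesis .
qed

lemma power2_clip_diff_le_sum: "(clip u t - clip v s)\<^sup>2 \<le> 2 * t\<^sup>2 + 2 * s\<^sup>2"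
  using power2_diff_le[of "clip u t" "clip v s"] power2_clip_le[of u t] power2_clip_le[of v s]
  by linarith

lemma fin_supp_diff_clip:
  assumes "fin_supp \<phi>"
  shows "fin_supp (\<lambda>x. u x - clip (u x) (u x - \<phi> x))"
proof -
  have "{x. u x - clip (u x) (u x - \<phi> x) \<noteq> 0} \<subseteq> {x. \<phi> x \<noteq> 0}"
    by auto
  then show ?thesis
    using assms unfolding fin_supp_def by (rule finite_subset)
qed

lemma in_L2_fin_supp: "fin_supp \<phi> \<Longrightarrow> in_L2 m \<phi>"
  unfolding fin_supp_def in_L2_def
  by (rule finite_nonzero_values_imp_summable_on) (auto elim: finite_subset[rotated])

lemma in_L2_diff:
  assumes m_nonneg: "\<And>x. 0 \<le> m x" and "in_L2 m u" and "in_L2 m v"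
  shows "in_L2 m (\<lambda>x. u x - v x)"
  unfolding in_L2_def
proof (rule summable_on_comparison_test)
  show "(\<lambda>x. 2 * ((u x)\<^sup>2 * m x) + 2 * ((v x)\<^sup>2 * m x)) summable_on UNIV"
    using assms by (auto simp: in_L2_def intro: summable_on_add summable_on_cmult_right)
  show "(u x - v x)\<^sup>2 * m x \<le> 2 * ((u x)\<^sup>2 * m x) + 2 * ((v x)\<^sup>2 * m x)" for x
    using mult_right_mono[OF power2_diff_le[of "u x" "v x"] m_nonneg[of x]]
    by (simp add: algebra_simps)
qed (simp add: m_nonneg)

lemma L2_norm_sq_nonneg: "(\<And>x. 0 \<le> m x) \<Longrightarrow> 0 \<le> L2_norm_sq m u"
  unfolding L2_norm_sq_def by (simp add: infsum_nonneg)

lemma power2_mult_le_L2_norm_sq: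
  assumes "\<And>x. 0 \<le> m x" and "in_L2 m u"
  shows "(u x)\<^sup>2 * m x \<le> L2_norm_sq m u"
  using finite_sum_le_infsum[of "\<lambda>x. (u x)\<^sup>2 * m x" UNIV "{x}"] assms
  unfolding in_L2_def L2_norm_sq_def by simp

lemma L2_norm_sq_clip_le:
  assumes m_nonneg: "\<And>x. 0 \<le> m x" and u: "in_L2 m u" and d: "in_L2 m d"
  shows "in_L2 m (\<lambda>x. clip (u x) (d x))"
    and "L2_norm_sq m (\<lambda>x. clip (u x) (d x)) \<le> L2_norm_sq m d"
proof -
  show g: "in_L2 m (\<lambda>x. clip (u x) (d x))"
    using u unfolding in_L2_def
    by (rule summable_on_comparison_test) (simp_all add: m_nonneg mult_right_mono power2_clip_le_bound)
  show "L2_norm_sq m (\<lambda>x. clip (u x) (d x)) \<le> L2_norm_sq m d"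
    using g d unfolding in_L2_def L2_norm_sq_def
    by (rule infsum_mono) (simp add: m_nonneg mult_right_mono power2_clip_le)
qed

definition form_norm_sq ::
    "('a \<Rightarrow> 'a \<Rightarrow> real) \<Rightarrow> ('a \<Rightarrow> real) \<Rightarrow> ('a \<Rightarrow> real) \<Rightarrow> ('a \<Rightarrow> real) \<Rightarrow> real" where
  "form_norm_sq w mu pot u = energy w mu pot u + L2_norm_sq mu u"

lemma mem_form_domain_iff:
  "u \<in> form_domain w mu pot \<longleftrightarrow> in_L2 mu u \<and> energy_finite w mu pot u \<and>
     (\<forall>\<epsilon>>0. \<exists>\<phi>. fin_supp \<phi> \<and> form_norm_sq w mu pot (\<lambda>x. u x - \<phi> x) < \<epsilon>)"
proof -
  have sqrt_approx_iff: "(\<forall>\<epsilon>>0. \<exists>\<phi>. fin_supp \<phi> \<and> sqrt (N \<phi>) < \<epsilon>) \<longleftrightarrow>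
      (\<forall>\<epsilon>>0. \<exists>\<phi>. fin_supp \<phi> \<and> N \<phi> < \<epsilon>)" for N :: "('a \<Rightarrow> real) \<Rightarrow> real"
  proof safe
    fix \<epsilon> :: real
    assume "\<forall>\<epsilon>>0. \<exists>\<phi>. fin_supp \<phi> \<and> sqrt (N \<phi>) < \<epsilon>" and "0 < \<epsilon>"
    then obtain \<phi> where "fin_supp \<phi>" "sqrt (N \<phi>) < sqrt \<epsilon>"
      by (meson real_sqrt_gt_zero)
    then show "\<exists>\<phi>. fin_supp \<phi> \<and> N \<phi> < \<epsilon>"
      by auto
  next
    fix \<epsilon> :: real
    assume "\<forall>\<epsilon>>0. \<exists>\<phi>. fin_supp \<phi> \<and> N \<phi> < \<epsilon>" and "0 < \<epsilon>"
    then obtain \<phi> where "fin_supp \<phi>" "N \<phi> < \<epsilon>\<^sup>2"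
      by (meson zero_less_power)
    then have "sqrt (N \<phi>) < \<epsilon>"
      using \<open>0 < \<epsilon>\<close> real_sqrt_less_iff[of "N \<phi>" "\<epsilon>\<^sup>2"] by simp
    then show "\<exists>\<phi>. fin_supp \<phi> \<and> sqrt (N \<phi>) < \<epsilon>"
      using \<open>fin_supp \<phi>\<close> by blast
  qed
  show ?thesis
    unfolding form_domain_def form_norm_sq_def using sqrt_approx_iff by simp
qed

lemma energy_finite_potential_iff:
  "energy_finite w mu pot u \<longleftrightarrow> energy_finite w mu (\<lambda>_. 0) u \<and> in_L2 (\<lambda>x. pot x * mu x) u"
  by (simp add: energy_finite_def in_L2_def mult_ac)

lemma energy_potential_split:
  "energy w mu pot u = energy w mu (\<lambda>_. 0) u + L2_norm_sq (\<lambda>x. pot x * mu x) u"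
  by (simp add: energy_def L2_norm_sq_def mult_ac)

locale weighted_graph =
  fixes w :: "'a \<Rightarrow> 'a \<Rightarrow> real" and mu :: "'a \<Rightarrow> real"
  assumes weight_sym: "w x y = w y x"
    and weight_nonneg: "0 \<le> w x y"
    and locally_finite: "finite {y. 0 < w x y}"
    and measure_pos: "0 < mu x"

lemma simple_weighted_graph_imp_weighted_graph: "simple_weighted_graph w mu \<Longrightarrow> weighted_graph w mu"
  unfolding simple_weighted_graph_def by unfold_locales auto

context weighted_graph
begin

lemma measure_nonneg: "0 \<le> mu x"
  using measure_pos less_imp_le by blast

definition edge_term :: "('a \<Rightarrow> real) \<Rightarrow> 'a \<times> 'a \<Rightarrow> real" where
  "edge_term u = (\<lambda>(x, y). w x y * (u x - u y)\<^sup>2)"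

lemma edge_term_nonneg: "0 \<le> edge_term u p"
  by (cases p) (simp add: edge_term_def weight_nonneg)

lemma energy_finite_zero_potential_iff:
  "energy_finite w mu (\<lambda>_. 0) u \<longleftrightarrow> edge_term u summable_on UNIV"
  by (simp add: energy_finite_def edge_term_def)

lemma energy_zero_potential: "energy w mu (\<lambda>_. 0) u = infsum (edge_term u) UNIV / 2"
  by (simp add: energy_def edge_term_def)

lemma energy_zero_potential_nonneg: "0 \<le> energy w mu (\<lambda>_. 0) u"
  by (simp add: energy_zero_potential infsum_nonneg edge_term_nonneg)

lemma form_norm_sq_mono_potential:
  assumes "\<And>x. 0 \<le> pot x"
  shows "form_norm_sq w mu (\<lambda>_. 0) u \<le> form_norm_sq w mu pot u"
proof -
  have "0 \<le> L2_norm_sq (\<lambda>x. pot x * mu x) u"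
    using assms measure_pos by (intro L2_norm_sq_nonneg) (simp add: less_imp_le)
  then show ?thesis
    unfolding form_norm_sq_def using energy_potential_split[of w mu pot u] by simp
qed

lemma energy_finite_fin_supp:
  assumes "fin_supp \<phi>"
  shows "energy_finite w mu pot \<phi>"
proof -
  define N where "N = (SIGMA x:{x. \<phi> x \<noteq> 0}. {y. 0 < w x y})"
  have "finite N"
    using assms locally_finite unfolding N_def fin_supp_def by blast
  moreover have "{p. edge_term \<phi> p \<noteq> 0} \<subseteq> N \<union> prod.swap ` N"
  proof (rule subsetI)
    fix p
    assume "p \<in> {p. edge_term \<phi> p \<noteq> 0}"
    moreover obtain x y where p: "p = (x, y)"
      by fastforce
    ultimately have "0 < w x y" "0 < w y x" "\<phi> x \<noteq> 0 \<or> \<phi> y \<noteq> 0"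
      using weight_nonneg[of x y] weight_sym[of x y] by (auto simp: edge_term_def)
    then show "p \<in> N \<union> prod.swap ` N"
      unfolding N_def p by (auto simp: image_iff)
  qed
  ultimately have "edge_term \<phi> summable_on UNIV"
    by (intro finite_nonzero_values_imp_summable_on) (simp add: finite_subset)
  then show ?thesis
    using in_L2_fin_supp[OF assms] energy_finite_potential_iff energy_finite_zero_potential_iff by blast
qed

lemma energy_finite_diff:
  assumes pot_nonneg: "\<And>x. 0 \<le> pot x"
    and u: "energy_finite w mu pot u" and v: "energy_finite w mu pot v"
  shows "energy_finite w mu pot (\<lambda>x. u x - v x)"
proof -
  have "edge_term (\<lambda>x. u x - v x) summable_on UNIV"
  proof (rule summable_on_comparison_test)
    show "(\<lambda>p. 2 * edge_term u p + 2 * edge_term v p) summable_on UNIV"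
      using u v by (auto simp: energy_finite_potential_iff[of _ _ pot] energy_finite_zero_potential_iff
          intro: summable_on_add summable_on_cmult_right)
    show "edge_term (\<lambda>x. u x - v x) p \<le> 2 * edge_term u p + 2 * edge_term v p" for p
      using mult_left_mono[OF power2_diff_le[of "u (fst p) - u (snd p)" "v (fst p) - v (snd p)"]
          weight_nonneg[of "fst p" "snd p"]]
      by (cases p) (simp add: edge_term_def algebra_simps)
  qed (rule edge_term_nonneg)
  moreover have "in_L2 (\<lambda>x. pot x * mu x) (\<lambda>x. u x - v x)"
    using u v pot_nonneg measure_pos
    by (intro in_L2_diff) (auto simp: energy_finite_potential_iff[of _ _ pot] less_imp_le)
  ultimately show ?thesis
    using energy_finite_potential_iff energy_finite_zero_potential_iff by blast
qed

lemma L2_norm_sq_potential_clip_le: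
  assumes pot_nonneg: "\<And>x. 0 \<le> pot x"
    and u: "in_L2 (\<lambda>x. pot x * mu x) u" and d: "in_L2 mu d" and K: "finite K"
  defines "g \<equiv> \<lambda>x. clip (u x) (d x)"
  shows "in_L2 (\<lambda>x. pot x * mu x) g"
    and "L2_norm_sq (\<lambda>x. pot x * mu x) g
           \<le> sum pot K * L2_norm_sq mu d + infsum (\<lambda>x. (u x)\<^sup>2 * (pot x * mu x)) (- K)"
proof -
  have pot_mu_nonneg: "0 \<le> pot x * mu x" for x
    using pot_nonneg[of x] measure_pos[of x] by simp
  define f where "f = (\<lambda>x. (g x)\<^sup>2 * (pot x * mu x))"
  define b where "b = (\<lambda>x. (u x)\<^sup>2 * (pot x * mu x))"
  have b_summable: "b summable_on UNIV"
    using u by (simp add: in_L2_def b_def)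
  have f_nonneg: "0 \<le> f x" for x
    by (simp add: f_def pot_mu_nonneg)
  have f_le_b: "f x \<le> b x" for x
    unfolding f_def b_def g_def using mult_right_mono[OF power2_clip_le_bound pot_mu_nonneg] .
  show f_summable: "in_L2 (\<lambda>x. pot x * mu x) g"
    unfolding in_L2_def f_def[symmetric]
    by (rule infsum_le_finite_part_plus_tail(1)[where a="\<lambda>_. 0"]) (use K b_summable f_nonneg f_le_b in auto)
  have "infsum f UNIV \<le> sum f K + infsum b (- K)"
    by (rule order_trans[OF infsum_le_finite_part_plus_tail(2)[where a="\<lambda>_. 0"]])
      (use K b_summable f_nonneg f_le_b in auto)
  also have "sum f K \<le> (\<Sum>x\<in>K. pot x * L2_norm_sq mu d)"
  proof (rule sum_mono)
    fix x
    have "f x \<le> pot x * ((d x)\<^sup>2 * mu x)"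
      using mult_right_mono[OF power2_clip_le pot_mu_nonneg] by (simp add: f_def g_def mult_ac)
    also have "\<dots> \<le> pot x * L2_norm_sq mu d"
      using power2_mult_le_L2_norm_sq[OF measure_nonneg d] pot_nonneg by (simp add: mult_left_mono)
    finally show "f x \<le> pot x * L2_norm_sq mu d" .
  qed
  finally show "L2_norm_sq (\<lambda>x. pot x * mu x) g
      \<le> sum pot K * L2_norm_sq mu d + infsum (\<lambda>x. (u x)\<^sup>2 * (pot x * mu x)) (- K)"
    by (simp add: L2_norm_sq_def f_def b_def sum_distrib_right)
qed

lemma edge_term_clip_le:
  "edge_term (\<lambda>x. clip (u x) (d x)) p \<le> 2 * edge_term d p + 2 * edge_term u p"
proof (cases p)
  case (Pair x y)
  have "(clip (u x) (d x) - clip (u y) (d y))\<^sup>2 \<le> 2 * (u x - u y)\<^sup>2 + 2 * (d x - d y)\<^sup>2"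
    by (rule power2_clip_diff_le)
  from mult_left_mono[OF this weight_nonneg[of x y]] show ?thesis
    by (simp add: Pair edge_term_def algebra_simps)
qed

lemma edge_term_clip_le_values:
  "edge_term (\<lambda>x. clip (u x) (d x)) (x, y) \<le> 2 * (w x y * ((d x)\<^sup>2 + (d y)\<^sup>2))"
proof -
  have "(clip (u x) (d x) - clip (u y) (d y))\<^sup>2 \<le> 2 * (d x)\<^sup>2 + 2 * (d y)\<^sup>2"
    by (rule power2_clip_diff_le_sum)
  from mult_left_mono[OF this weight_nonneg[of x y]] show ?thesis
    by (simp add: edge_term_def algebra_simps)
qed

lemma energy_clip_le:
  assumes u: "energy_finite w mu (\<lambda>_. 0) u" and d: "energy_finite w mu (\<lambda>_. 0) d"
    and d_L2: "in_L2 mu d" and S: "finite S"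
  defines "g \<equiv> \<lambda>x. clip (u x) (d x)"
  shows "energy_finite w mu (\<lambda>_. 0) g"
    and "energy w mu (\<lambda>_. 0) g \<le> 2 * energy w mu (\<lambda>_. 0) d
           + L2_norm_sq mu d * (\<Sum>(x, y)\<in>S. w x y * (1 / mu x + 1 / mu y))
           + infsum (edge_term u) (- S)"
proof -
  define n where "n = L2_norm_sq mu d"
  have d_pointwise: "(d x)\<^sup>2 \<le> n / mu x" for x
    using power2_mult_le_L2_norm_sq[OF measure_nonneg d_L2, of x] measure_pos[of x]
    by (simp add: n_def pos_le_divide_eq)
  have near: "edge_term g p \<le> 2 * n * (case p of (x, y) \<Rightarrow> w x y * (1 / mu x + 1 / mu y))" for p
  proof (cases p)
    case (Pair x y)
    have "(d x)\<^sup>2 + (d y)\<^sup>2 \<le> n * (1 / mu x + 1 / mu y)"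
      using d_pointwise[of x] d_pointwise[of y] by (simp add: algebra_simps)
    from mult_left_mono[OF this weight_nonneg[of x y]]
    have "w x y * ((d x)\<^sup>2 + (d y)\<^sup>2) \<le> n * (w x y * (1 / mu x + 1 / mu y))"
      by (simp only: mult_ac)
    then show ?thesis
      using edge_term_clip_le_values[of u d x y] unfolding Pair g_def prod.case by linarith
  qed
  have a: "(\<lambda>p. 2 * edge_term d p) summable_on UNIV"
    and b: "(\<lambda>p. 2 * edge_term u p) summable_on UNIV"
    using u d by (auto simp: energy_finite_zero_potential_iff intro: summable_on_cmult_right)
  have g_summable: "edge_term g summable_on UNIV"
    by (rule infsum_le_finite_part_plus_tail(1)[OF S a b])
      (use edge_term_clip_le[of u d] in \<open>auto simp: g_def edge_term_nonneg\<close>)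
  then show "energy_finite w mu (\<lambda>_. 0) g"
    by (simp add: energy_finite_zero_potential_iff)
  have "infsum (edge_term g) UNIV
      \<le> sum (edge_term g) S + infsum (\<lambda>p. 2 * edge_term d p) UNIV + infsum (\<lambda>p. 2 * edge_term u p) (- S)"
    by (rule infsum_le_finite_part_plus_tail(2)[OF S a b])
      (use edge_term_clip_le[of u d] in \<open>auto simp: g_def edge_term_nonneg\<close>)
  also have "sum (edge_term g) S \<le> 2 * n * (\<Sum>(x, y)\<in>S. w x y * (1 / mu x + 1 / mu y))"
    unfolding sum_distrib_left by (rule sum_mono) (rule near)
  finally show "energy w mu (\<lambda>_. 0) g \<le> 2 * energy w mu (\<lambda>_. 0) d
      + L2_norm_sq mu d * (\<Sum>(x, y)\<in>S. w x y * (1 / mu x + 1 / mu y)) + infsum (edge_term u) (- S)"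
    by (simp add: energy_zero_potential infsum_cmult_right' n_def)
qed

lemma form_norm_sq_clip_le:
  assumes pot_nonneg: "\<And>x. 0 \<le> pot x"
    and u_L2: "in_L2 mu u" and u_fin: "energy_finite w mu (\<lambda>_. 0) u"
    and u_pot: "in_L2 (\<lambda>x. pot x * mu x) u"
    and d_L2: "in_L2 mu d" and d_fin: "energy_finite w mu (\<lambda>_. 0) d"
    and K: "finite K" and S: "finite S"
  defines "g \<equiv> \<lambda>x. clip (u x) (d x)"
  shows "form_norm_sq w mu pot g
           \<le> 2 * energy w mu (\<lambda>_. 0) d
             + (sum pot K + (\<Sum>(x, y)\<in>S. w x y * (1 / mu x + 1 / mu y)) + 1) * L2_norm_sq mu d
             + infsum (\<lambda>x. (u x)\<^sup>2 * (pot x * mu x)) (- K) + infsum (edge_term u) (- S)"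
proof -
  have "form_norm_sq w mu pot g
      = energy w mu (\<lambda>_. 0) g + L2_norm_sq (\<lambda>x. pot x * mu x) g + L2_norm_sq mu g"
    unfolding form_norm_sq_def energy_potential_split[of w mu pot] ..
  then show ?thesis
    using energy_clip_le(2)[OF u_fin d_fin d_L2 S]
      L2_norm_sq_potential_clip_le(2)[OF pot_nonneg u_pot d_L2 K]
      L2_norm_sq_clip_le(2)[OF measure_nonneg u_L2 d_L2]
    unfolding g_def by (simp add: algebra_simps)
qed

lemma clipped_approximation:
  assumes pot_nonneg: "\<And>x. 0 \<le> pot x"
    and u_L2: "in_L2 mu u" and u_fin: "energy_finite w mu (\<lambda>_. 0) u"
    and u_pot: "in_L2 (\<lambda>x. pot x * mu x) u"
    and approx: "\<And>\<delta>. 0 < \<delta> \<Longrightarrow> \<exists>\<phi>. fin_supp \<phi> \<and> form_norm_sq w mu (\<lambda>_. 0) (\<lambda>x. u x - \<phi> x) < \<delta>"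
    and "0 < \<epsilon>"
  obtains \<psi> where "fin_supp \<psi>" and "form_norm_sq w mu pot (\<lambda>x. u x - \<psi> x) < \<epsilon>"
proof -
  have "0 < \<epsilon> / 4"
    using \<open>0 < \<epsilon>\<close> by simp
  then obtain K where K: "finite K" "infsum (\<lambda>x. (u x)\<^sup>2 * (pot x * mu x)) (- K) \<le> \<epsilon> / 4"
    using infsum_tail_le[OF u_pot[unfolded in_L2_def]] by blast
  obtain S where S: "finite S" "infsum (edge_term u) (- S) \<le> \<epsilon> / 4"
    using infsum_tail_le[OF u_fin[unfolded energy_finite_zero_potential_iff] \<open>0 < \<epsilon> / 4\<close>] by blast
  define P where "P = sum pot K"
  define Q where "Q = (\<Sum>(x, y)\<in>S. w x y * (1 / mu x + 1 / mu y))"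
  have "0 \<le> P"
    unfolding P_def using pot_nonneg by (simp add: sum_nonneg)
  have "0 \<le> Q"
    unfolding Q_def using weight_nonneg measure_nonneg by (intro sum_nonneg) auto
  define \<delta> where "\<delta> = \<epsilon> / (2 * (P + Q + 2))"
  have "0 < \<delta>"
    unfolding \<delta>_def using \<open>0 < \<epsilon>\<close> \<open>0 \<le> P\<close> \<open>0 \<le> Q\<close> by simp
  then obtain \<phi> where \<phi>: "fin_supp \<phi>" and small: "form_norm_sq w mu (\<lambda>_. 0) (\<lambda>x. u x - \<phi> x) < \<delta>"
    using approx by blast
  define d where "d = (\<lambda>x. u x - \<phi> x)"
  define g where "g = (\<lambda>x. clip (u x) (d x))"
  have d_L2: "in_L2 mu d"
    unfolding d_def using u_L2 in_L2_fin_supp[OF \<phi>] by (rule in_L2_diff[OF measure_nonneg])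
  have d_fin: "energy_finite w mu (\<lambda>_. 0) d"
    using energy_finite_diff[of "\<lambda>_. 0", OF _ u_fin energy_finite_fin_supp[OF \<phi>]]
    by (simp add: d_def)
  define E n where "E = energy w mu (\<lambda>_. 0) d" and "n = L2_norm_sq mu d"
  have "0 \<le> E" "0 \<le> n" "E + n < \<delta>"
    using energy_zero_potential_nonneg L2_norm_sq_nonneg[OF measure_nonneg] small
    by (auto simp: E_def n_def d_def form_norm_sq_def)
  have "form_norm_sq w mu pot g \<le> 2 * E + (P + Q + 1) * n + \<epsilon> / 4 + \<epsilon> / 4"
    using form_norm_sq_clip_le[OF pot_nonneg u_L2 u_fin u_pot d_L2 d_fin K(1) S(1)] K(2) S(2)
    unfolding E_def n_def P_def Q_def g_def by linarith
  also have "\<dots> \<le> (P + Q + 2) * (E + n) + \<epsilon> / 2"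
    using \<open>0 \<le> E\<close> \<open>0 \<le> n\<close> \<open>0 \<le> P\<close> \<open>0 \<le> Q\<close> by (simp add: algebra_simps)
  also have "\<dots> < (P + Q + 2) * \<delta> + \<epsilon> / 2"
    using \<open>E + n < \<delta>\<close> \<open>0 \<le> P\<close> \<open>0 \<le> Q\<close> by simp
  also have "\<dots> = \<epsilon>"
    unfolding \<delta>_def using \<open>0 \<le> P\<close> \<open>0 \<le> Q\<close> by (simp add: field_simps)
  finally have "form_norm_sq w mu pot g < \<epsilon>" .
  moreover have "fin_supp (\<lambda>x. u x - g x)"
    unfolding g_def d_def using \<phi> by (rule fin_supp_diff_clip)
  ultimately show thesis
    using that[of "\<lambda>x. u x - g x"] by simp
qed

lemma form_domain_subset:
  assumes "\<And>x. 0 \<le> pot x"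
  shows "form_domain w mu pot \<subseteq> form_domain w mu (\<lambda>_. 0) \<inter> {u. in_L2 (\<lambda>x. pot x * mu x) u}"
proof
  fix u
  assume "u \<in> form_domain w mu pot"
  then have u_L2: "in_L2 mu u" and u_fin: "energy_finite w mu pot u"
    and approx: "\<And>\<epsilon>. 0 < \<epsilon> \<Longrightarrow> \<exists>\<phi>. fin_supp \<phi> \<and> form_norm_sq w mu pot (\<lambda>x. u x - \<phi> x) < \<epsilon>"
    by (simp_all add: mem_form_domain_iff)
  have "\<exists>\<phi>. fin_supp \<phi> \<and> form_norm_sq w mu (\<lambda>_. 0) (\<lambda>x. u x - \<phi> x) < \<epsilon>"
    if "0 < \<epsilon>" for \<epsilon>
  proof -
    obtain \<phi> where "fin_supp \<phi>" "form_norm_sq w mu pot (\<lambda>x. u x - \<phi> x) < \<epsilon>"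
      using approx \<open>0 < \<epsilon>\<close> by blast
    moreover have "form_norm_sq w mu (\<lambda>_. 0) (\<lambda>x. u x - \<phi> x) \<le> form_norm_sq w mu pot (\<lambda>x. u x - \<phi> x)"
      using assms by (rule form_norm_sq_mono_potential)
    ultimately show ?thesis
      by force
  qed
  then show "u \<in> form_domain w mu (\<lambda>_. 0) \<inter> {u. in_L2 (\<lambda>x. pot x * mu x) u}"
    using u_L2 u_fin by (simp add: mem_form_domain_iff energy_finite_potential_iff[of w mu pot])
qed

lemma form_domain_inter_L2_subset:
  assumes pot_nonneg: "\<And>x. 0 \<le> pot x"
  shows "form_domain w mu (\<lambda>_. 0) \<inter> {u. in_L2 (\<lambda>x. pot x * mu x) u} \<subseteq> form_domain w mu pot"
proof
  fix u
  assume "u \<in> form_domain w mu (\<lambda>_. 0) \<inter> {u. in_L2 (\<lambda>x. pot x * mu x) u}"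
  then have u_L2: "in_L2 mu u" and u_fin: "energy_finite w mu (\<lambda>_. 0) u"
    and u_pot: "in_L2 (\<lambda>x. pot x * mu x) u"
    and approx: "\<And>\<delta>. 0 < \<delta> \<Longrightarrow> \<exists>\<phi>. fin_supp \<phi> \<and> form_norm_sq w mu (\<lambda>_. 0) (\<lambda>x. u x - \<phi> x) < \<delta>"
    by (simp_all add: mem_form_domain_iff)
  have "\<exists>\<psi>. fin_supp \<psi> \<and> form_norm_sq w mu pot (\<lambda>x. u x - \<psi> x) < \<epsilon>" if "0 < \<epsilon>" for \<epsilon>
    using clipped_approximation[OF pot_nonneg u_L2 u_fin u_pot approx that] by blast
  then show "u \<in> form_domain w mu pot"
    using u_L2 u_fin u_pot by (simp add: mem_form_domain_iff energy_finite_potential_iff[of w mu pot])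
qed

end

theorem lemma2p2:
  fixes w :: "'a \<Rightarrow> 'a \<Rightarrow> real" and mu pot :: "'a \<Rightarrow> real"
  assumes "simple_weighted_graph w mu"
    and "\<forall>x. 0 \<le> pot x"
  shows "form_domain w mu pot
         = form_domain w mu (\<lambda>_. 0) \<inter> {u. in_L2 (\<lambda>x. pot x * mu x) u}"
proof -
  interpret weighted_graph w mu
    using assms(1) by (rule simple_weighted_graph_imp_weighted_graph)
  show ?thesis
    using assms(2) by (intro subset_antisym form_domain_subset form_domain_inter_L2_subset) auto
qed

end
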